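(* For the symmetric walk started at $X_0=[\alpha N]$ with $\alpha\in(0,1)$, $$\lim_{N\to\infty}\frac{E_{[\alpha N]}[R_N]}{N}=\int_0^1\beta\,g_\alpha(\beta)\,d\beta=-\alpha\log\alpha-(1-\alpha)\log(1-\alpha).$$ Here $g_\alpha$ is the density defined in the context. The right-hand side is the entropy of the exit distribution: in the limit the walk exits at $0$ with probability $1-\alpha$ and at $N$ with probability $\alpha$. The maximum value, $\log 2$, is attained at $\alpha=1/2$.
   Context: Fix $N\ge2$ and let $\mathcal T_N=\{0,1,\dots,N\}$. Let $(X_n)_{n\ge0}$ be the symmetric nearest-neighbour random walk on $\mathcal T_N$: each step is $\pm1$ with probability $1/2$ each, and the walk is stopped the first time it is at $0$ or $N$. $P_x$ and $E_x$ denote probability and expectation with $X_0=x$. Let $T_a=\inf\{n\ge1:X_n=a\}$ and $\tau_N=T_0\wedge T_N$. Let $G(y)=\sum_{k=0}^{\tau_N}\mathbf 1\{X_k=y\}$, and let the range be $R_N=\#\{y\in\mathcal T_N:G(y)\ge1\}$. $[\cdot]$ is the integer part. With $a=\alpha\wedge(1-\alpha)$ and $b=\alpha\vee(1-\alpha)$, the density $g_\alpha$ is given by $g_\alpha(\beta)=a/\beta^2$ for $a<\beta<b$, $g_\alpha(\beta)=1/\beta^2$ for $b\le\beta\le1$, and $g_\alpha(\beta)=0$ otherwise. *)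

theory Defs
  imports "HOL-Probability.Probability"
begin

definition step_pmf :: "int pmf" where
  "step_pmf = pmf_of_set {-1, 1}"

definition walk_space :: "int stream measure" where
  "walk_space = stream_space (measure_pmf step_pmf)"

primrec walk :: "nat \<Rightarrow> int \<Rightarrow> int stream \<Rightarrow> nat \<Rightarrow> int" where
  "walk N x \<omega> 0 = x"
| "walk N x \<omega> (Suc n) =
     (if walk N x \<omega> n \<in> {0, int N} then walk N x \<omega> n else walk N x \<omega> n + \<omega> !! n)"

definition walk_range :: "nat \<Rightarrow> int \<Rightarrow> int stream \<Rightarrow> nat" where
  "walk_range N x \<omega> = card {y \<in> {0..int N}. \<exists>k. walk N x \<omega> k = y}"

definition expected_range :: "nat \<Rightarrow> int \<Rightarrow> real" where
  "expected_range N x = (\<integral>\<omega>. real (walk_range N x \<omega>) \<partial>walk_space)"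

definition g_dens :: "real \<Rightarrow> real \<Rightarrow> real" where
  "g_dens \<alpha> \<beta> =
     (let a = min \<alpha> (1 - \<alpha>); b = max \<alpha> (1 - \<alpha>) in
      if a < \<beta> \<and> \<beta> < b then a / \<beta>\<^sup>2
      else if b \<le> \<beta> \<and> \<beta> \<le> 1 then 1 / \<beta>\<^sup>2
      else 0)"

end

theory Submission
  imports Defs "HOL-Analysis.Harmonic_Numbers"
begin

text \<open>
  The range is the number of sites y in {0..N} that are hit, so by linearity E_x[R_N] is the
  sum over y of the hitting probabilities P_x(the walk hits y).  Conditioning on the first step
  shows that, as a function of the start x, this probability is discrete harmonic away from the
  absorbing sites 0, N and the target y; a discrete harmonic function on an integer interval is
  affine, and the boundary values give P_x(hit y) = x/y for x < y and (N-x)/(N-y) for x > y.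
  Summing yields the exact formula
     E_x[R_N] = 1 + x (H_N - H_x) + (N-x) (H_N - H_{N-x})
  in terms of harmonic numbers H_n.  Since H_n - ln n converges (Euler-Mascheroni), for
  x/N -> c > 0 we get (x/N)(H_N - H_x) -> -c ln c, which gives the limit along x = floor(alpha N).
  Finally the integral of beta g_alpha(beta) over [0,1] is computed piecewise with the
  antiderivative ln, and both values agree.
\<close>

lemma walk_measurable [measurable]:
  "(\<lambda>\<omega>. walk N x \<omega> k) \<in> measurable walk_space (count_space UNIV)"
  unfolding walk_space_def by (induction k) simp_all

lemma prob_space_walk_space: "prob_space walk_space"
  unfolding walk_space_def
  by (rule prob_space.prob_space_stream_space) (rule prob_space_measure_pmf)

lemma walk_absorbed: "x \<in> {0, int N} \<Longrightarrow> walk N x \<omega> k = x"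
  by (induction k) auto

lemma walk_Stream:
  "x \<notin> {0, int N} \<Longrightarrow> walk N x (s ## \<omega>) (Suc k) = walk N (x + s) \<omega> k"
  by (induction k) auto

definition hits :: "nat \<Rightarrow> int \<Rightarrow> int \<Rightarrow> int stream set" where
  "hits N x y = {\<omega>. \<exists>k. walk N x \<omega> k = y}"

lemma hits_sets [measurable]: "hits N x y \<in> sets walk_space"
proof -
  have "hits N x y = (\<Union>k. {\<omega>\<in>space walk_space. walk N x \<omega> k = y})"
    by (auto simp: hits_def walk_space_def space_stream_space)
  also have "\<dots> \<in> sets walk_space" by measurable
  finally show ?thesis .
qed

lemma hits_Stream:
  assumes "x \<notin> {0, int N}" "x \<noteq> y"
  shows "s ## \<omega> \<in> hits N x y \<longleftrightarrow> \<omega> \<in> hits N (x + s) y"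
proof
  assume "s ## \<omega> \<in> hits N x y"
  then obtain k where k: "walk N x (s ## \<omega>) k = y" by (auto simp: hits_def)
  with assms obtain j where "k = Suc j" by (cases k) auto
  with k assms have "walk N (x + s) \<omega> j = y" by (metis walk_Stream)
  then show "\<omega> \<in> hits N (x + s) y" by (auto simp: hits_def)
next
  assume "\<omega> \<in> hits N (x + s) y"
  then obtain k where "walk N (x + s) \<omega> k = y" by (auto simp: hits_def)
  with assms have "walk N x (s ## \<omega>) (Suc k) = y" by (metis walk_Stream)
  then show "s ## \<omega> \<in> hits N x y" unfolding hits_def by blast
qed

definition hit_prob :: "nat \<Rightarrow> int \<Rightarrow> int \<Rightarrow> real" where
  "hit_prob N x y = measure walk_space (hits N x y)"

lemma hit_prob_self: "hit_prob N y y = 1"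
proof -
  have "hits N y y = space walk_space"
    by (auto simp: hits_def walk_space_def space_stream_space intro: exI[of _ 0])
  then show ?thesis
    by (simp add: hit_prob_def prob_space.prob_space[OF prob_space_walk_space])
qed

lemma hit_prob_absorbed: "x \<in> {0, int N} \<Longrightarrow> x \<noteq> y \<Longrightarrow> hit_prob N x y = 0"
  by (simp add: hit_prob_def hits_def walk_absorbed)

text \<open>Conditioning on the first step: away from the boundary and from the target,
  the hitting probability is the average of its values at the two neighbours.\<close>
lemma hit_prob_harmonic:
  assumes "x \<notin> {0, int N}" "x \<noteq> y"
  shows "hit_prob N x y = (hit_prob N (x - 1) y + hit_prob N (x + 1) y) / 2"
proof -
  interpret S: prob_space walk_space by (rule prob_space_walk_space)
  have "ennreal (hit_prob N x y) = emeasure walk_space (hits N x y)"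
    by (simp add: hit_prob_def S.emeasure_eq_measure)
  also have "\<dots> = (\<integral>\<^sup>+t. emeasure walk_space {\<omega>\<in>space walk_space. t ## \<omega> \<in> hits N x y} \<partial>step_pmf)"
    unfolding walk_space_def
    by (rule prob_space.emeasure_stream_space[OF prob_space_measure_pmf])
       (simp add: hits_sets[unfolded walk_space_def])
  also have "\<dots> = (\<integral>\<^sup>+t. emeasure walk_space (hits N (x + t) y) \<partial>step_pmf)"
    using assms by (simp add: hits_Stream walk_space_def space_stream_space)
  also have "\<dots> = (\<integral>\<^sup>+t. ennreal (hit_prob N (x + t) y) \<partial>step_pmf)"
    by (simp add: hit_prob_def S.emeasure_eq_measure)
  also have "\<dots> = (ennreal (hit_prob N (x - 1) y) + ennreal (hit_prob N (x + 1) y)) / 2"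
    unfolding step_pmf_def by (subst nn_integral_pmf_of_set) (simp_all add: add.commute)
  also have "\<dots> = ennreal ((hit_prob N (x - 1) y + hit_prob N (x + 1) y) / 2)"
  proof -
    have "0 \<le> hit_prob N z y" for z by (simp add: hit_prob_def)
    then show ?thesis
      by (simp only: ennreal_plus[symmetric] divide_ennreal[symmetric] ennreal_numeral
                     add_nonneg_nonneg zero_less_numeral)
  qed
  finally show ?thesis
    by (simp add: hit_prob_def)
qed

text \<open>Linearity of expectation: the expected range is the sum of the hitting probabilities.\<close>
lemma expected_range_eq_sum_hit_prob:
  "expected_range N x = (\<Sum>y\<in>{0..int N}. hit_prob N x y)"
proof -
  interpret S: prob_space walk_space by (rule prob_space_walk_space)
  have range_eq: "real (walk_range N x \<omega>) = (\<Sum>y\<in>{0..int N}. indicator (hits N x y) \<omega>)" for \<omega>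
  proof -
    have "{y \<in> {0..int N}. \<exists>k. walk N x \<omega> k = y} = {0..int N} \<inter> {y. \<omega> \<in> hits N x y}"
      by (auto simp: hits_def)
    then show ?thesis
      by (simp add: walk_range_def indicator_def sum.If_cases)
  qed
  have "expected_range N x = (\<Sum>y\<in>{0..int N}. \<integral>\<omega>. indicator (hits N x y) \<omega> \<partial>walk_space)"
    unfolding expected_range_def range_eq
    by (rule Bochner_Integration.integral_sum) (simp add: S.emeasure_eq_measure)
  then show ?thesis
    by (simp add: hit_prob_def)
qed

lemma harmonic_increment_const:
  fixes f :: "int \<Rightarrow> real"
  assumes harmonic: "\<And>z. a < z \<Longrightarrow> z < b \<Longrightarrow> f z = (f (z - 1) + f (z + 1)) / 2"
    and "a \<le> x" "x < b"
  shows "f (x + 1) - f x = f (a + 1) - f a"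
  using assms(2,3)
proof (induction x rule: int_ge_induct)
  case base
  then show ?case by simp
next
  case (step z)
  then have "f (z + 1) = (f z + f (z + 1 + 1)) / 2"
    using harmonic[of "z + 1"] by simp
  with step show ?case by simp
qed

lemma harmonic_affine:
  fixes f :: "int \<Rightarrow> real"
  assumes harmonic: "\<And>z. a < z \<Longrightarrow> z < b \<Longrightarrow> f z = (f (z - 1) + f (z + 1)) / 2"
    and "a < b" "a \<le> x" "x \<le> b"
  shows "f x = f a + (f b - f a) * (x - a) / (b - a)"
proof -
  define d where "d = f (a + 1) - f a"
  have affine: "f z = f a + (z - a) * d" if "a \<le> z" "z \<le> b" for z
    using that
  proof (induction z rule: int_ge_induct)
    case base
    then show ?case by simp
  next
    case (step z)
    then have "f (z + 1) - f z = d"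
      unfolding d_def by (intro harmonic_increment_const[OF harmonic]) auto
    with step show ?case by (simp add: algebra_simps)
  qed
  have "d = (f b - f a) / (b - a)"
    using affine[of b] assms by (simp add: field_simps)
  then show ?thesis
    using affine[of x] assms by simp
qed

text \<open>Hitting probabilities of the stopped walk (gambler's ruin): the harmonic function
  with boundary values 0 and 1 on [0, y] resp. [y, N].\<close>
lemma hit_prob_formula:
  assumes "0 \<le> x" "x \<le> int N" "0 \<le> y" "y \<le> int N"
  shows "hit_prob N x y =
           (if x = y then 1 else if x < y then x / y else (int N - x) / (int N - y))"
proof -
  consider "x = y" | "x < y" | "y < x" by linarith
  then show ?thesis
  proof cases
    case 1
    then show ?thesis by (simp add: hit_prob_self)
  next
    case 2
    have "hit_prob N x y = hit_prob N 0 y + (hit_prob N y y - hit_prob N 0 y) * (x - 0) / (y - 0)"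
      using 2 assms by (intro harmonic_affine[where f = "\<lambda>z. hit_prob N z y"] hit_prob_harmonic) auto
    moreover have "hit_prob N 0 y = 0"
      using 2 assms by (intro hit_prob_absorbed) auto
    ultimately show ?thesis
      using 2 by (simp add: hit_prob_self)
  next
    case 3
    have "hit_prob N x y
        = hit_prob N y y + (hit_prob N (int N) y - hit_prob N y y) * (x - y) / (int N - y)"
      using 3 assms by (intro harmonic_affine[where f = "\<lambda>z. hit_prob N z y"] hit_prob_harmonic) auto
    with 3 assms show ?thesis by (simp add: hit_prob_self hit_prob_absorbed field_simps)
  qed
qed

lemma harm_tail_sum:
  "x \<le> N \<Longrightarrow> (\<Sum>y\<in>{x<..N}. 1 / real y) = harm N - (harm x :: real)"
proof (induction N)
  case 0
  then show ?case by simp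
next
  case (Suc N)
  show ?case
  proof (cases "x = Suc N")
    case False
    with Suc.prems have "x \<le> N" "{x<..Suc N} = insert (Suc N) {x<..N}" by auto
    with Suc.IH show ?thesis by (simp add: harm_Suc inverse_eq_divide)
  qed simp
qed

lemma harm_tail_sum_reflected:
  assumes "x \<le> N"
  shows "(\<Sum>y<x. 1 / real (N - y)) = harm N - (harm (N - x) :: real)"
proof -
  have "(\<Sum>y<x. 1 / real (N - y)) = (\<Sum>z\<in>{N - x<..N}. 1 / real z)"
    using assms by (intro sum.reindex_bij_witness[of _ "\<lambda>z. N - z" "\<lambda>y. N - y"]) auto
  then show ?thesis
    using harm_tail_sum[of "N - x" N] by simp
qed

lemma expected_range_formula:
  assumes "x \<le> N"
  shows "expected_range N (int x)
           = 1 + real x * (harm N - harm x) + real (N - x) * (harm N - harm (N - x))"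
proof -
  define h where
    "h y = (if y = x then 1 else if x < y then real x / real y else real (N - x) / real (N - y))"
    for y
  have "expected_range N (int x) = (\<Sum>y\<in>int ` {0..N}. hit_prob N (int x) y)"
    by (simp add: expected_range_eq_sum_hit_prob image_int_atLeastAtMost)
  also have "\<dots> = (\<Sum>y\<in>{0..N}. hit_prob N (int x) (int y))"
    by (simp add: sum.reindex)
  also have "\<dots> = (\<Sum>y\<in>{0..N}. h y)"
    using assms by (intro sum.cong refl) (auto simp: hit_prob_formula h_def of_nat_diff)
  also have "{0..N} = {..<x} \<union> insert x {x<..N}"
    using assms by auto
  also have "(\<Sum>y\<in>{..<x} \<union> insert x {x<..N}. h y) = (\<Sum>y<x. h y) + 1 + (\<Sum>y\<in>{x<..N}. h y)"
    by (subst sum.union_disjoint) (auto simp: h_def)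
  also have "(\<Sum>y<x. h y) = real (N - x) * (\<Sum>y<x. 1 / real (N - y))"
    by (simp add: h_def sum_distrib_left)
  also have "(\<Sum>y\<in>{x<..N}. h y) = real x * (\<Sum>y\<in>{x<..N}. 1 / real y)"
    by (simp add: h_def sum_distrib_left)
  finally show ?thesis
    by (simp only: harm_tail_sum[OF assms] harm_tail_sum_reflected[OF assms])
qed

text \<open>Since harm n - ln n converges, harm n - harm m behaves like ln (n / m) when both
  tend to infinity; hence the limit below for m = u n with u n / n tending to c > 0.\<close>
lemma scaled_harm_diff_limit:
  fixes u :: "nat \<Rightarrow> nat" and c :: real
  assumes "0 < c" and ratio: "(\<lambda>n. real (u n) / real n) \<longlonglongrightarrow> c"
  shows "(\<lambda>n. real (u n) / real n * (harm n - harm (u n))) \<longlonglongrightarrow> - c * ln c"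
proof -
  have "filterlim (\<lambda>n. real (u n) / real n * real n) at_top sequentially"
    by (rule filterlim_tendsto_pos_mult_at_top[OF ratio \<open>0 < c\<close> filterlim_real_sequentially])
  then have "filterlim (\<lambda>n. real (u n)) at_top sequentially"
    by (rule filterlim_cong[THEN iffD1, OF refl refl, rotated])
       (use eventually_gt_at_top[of 0] in \<open>eventually_elim, simp\<close>)
  then have u_at_top: "filterlim u at_top sequentially"
    by (simp add: filterlim_sequentially_iff_filterlim_real)
  have "(\<lambda>n. (harm n - ln (real n)) - (harm (u n) - ln (real (u n))) - ln (real (u n) / real n))
        \<longlonglongrightarrow> euler_mascheroni - euler_mascheroni - ln c"
    using \<open>0 < c\<close>
    by (intro tendsto_intros euler_mascheroni_LIMSEQ tendsto_ln[OF ratio]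
              filterlim_compose[OF euler_mascheroni_LIMSEQ u_at_top]) auto
  moreover have "\<forall>\<^sub>F n in sequentially.
      (harm n - ln (real n)) - (harm (u n) - ln (real (u n))) - ln (real (u n) / real n)
        = harm n - harm (u n)"
    using eventually_gt_at_top[of 0] u_at_top[unfolded filterlim_at_top, rule_format, of 1]
    by eventually_elim (simp add: ln_div)
  ultimately have "(\<lambda>n. harm n - harm (u n)) \<longlonglongrightarrow> - ln c"
    by (simp add: tendsto_cong)
  from tendsto_mult[OF ratio this] show ?thesis
    by simp
qed

lemma floor_ratio_limit:
  fixes \<alpha> :: real
  assumes "0 \<le> \<alpha>"
  shows "(\<lambda>n. real (nat \<lfloor>\<alpha> * real n\<rfloor>) / real n) \<longlonglongrightarrow> \<alpha>"
proof (rule tendsto_sandwich[where f = "\<lambda>n. \<alpha> - 1 / real n" and h = "\<lambda>n. \<alpha>"])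
  have floor_bounds: "\<alpha> * real n - 1 \<le> real (nat \<lfloor>\<alpha> * real n\<rfloor>)"
    "real (nat \<lfloor>\<alpha> * real n\<rfloor>) \<le> \<alpha> * real n" for n
    using assms floor_correct[of "\<alpha> * real n"] by auto
  have "\<alpha> - 1 / real n \<le> real (nat \<lfloor>\<alpha> * real n\<rfloor>) / real n" if "0 < n" for n
  proof -
    have "\<alpha> - 1 / real n = (\<alpha> * real n - 1) / real n"
      using that by (simp add: field_simps)
    also have "\<dots> \<le> real (nat \<lfloor>\<alpha> * real n\<rfloor>) / real n"
      by (rule divide_right_mono[OF floor_bounds(1)]) simp
    finally show ?thesis .
  qed
  then show "\<forall>\<^sub>F n in sequentially. \<alpha> - 1 / real n \<le> real (nat \<lfloor>\<alpha> * real n\<rfloor>) / real n"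
    by (rule eventually_mono[OF eventually_gt_at_top[of 0]])
  show "\<forall>\<^sub>F n in sequentially. real (nat \<lfloor>\<alpha> * real n\<rfloor>) / real n \<le> \<alpha>"
    using eventually_gt_at_top[of 0]
    by eventually_elim (use floor_bounds in \<open>simp add: field_simps\<close>)
  show "(\<lambda>n. \<alpha> - 1 / real n) \<longlonglongrightarrow> \<alpha>"
    using tendsto_diff[OF tendsto_const[of \<alpha>] lim_1_over_n] by simp
qed simp

lemma expected_range_limit:
  fixes \<alpha> :: real
  assumes "0 < \<alpha>" "\<alpha> < 1"
  shows "(\<lambda>N. expected_range N \<lfloor>\<alpha> * real N\<rfloor> / real N)
           \<longlonglongrightarrow> - \<alpha> * ln \<alpha> - (1 - \<alpha>) * ln (1 - \<alpha>)"
proof -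
  define u where "u N = nat \<lfloor>\<alpha> * real N\<rfloor>" for N
  have floor_eq: "\<lfloor>\<alpha> * real N\<rfloor> = int (u N)" for N
    using assms by (simp add: u_def)
  have u_le: "u N \<le> N" for N
  proof -
    have "\<lfloor>\<alpha> * real N\<rfloor> \<le> \<lfloor>real N\<rfloor>"
      using assms by (intro floor_mono) (simp add: mult_left_le_one_le)
    then show ?thesis by (simp add: u_def)
  qed
  have ratio_u: "(\<lambda>N. real (u N) / real N) \<longlonglongrightarrow> \<alpha>"
    unfolding u_def using assms by (intro floor_ratio_limit) simp
  have ratio_rest: "(\<lambda>N. real (N - u N) / real N) \<longlonglongrightarrow> 1 - \<alpha>"
  proof (rule Lim_transform_eventually)
    show "(\<lambda>N. 1 - real (u N) / real N) \<longlonglongrightarrow> 1 - \<alpha>"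
      by (intro tendsto_intros ratio_u)
    show "\<forall>\<^sub>F N in sequentially. 1 - real (u N) / real N = real (N - u N) / real N"
      using eventually_gt_at_top[of 0]
      by eventually_elim (use u_le in \<open>simp add: of_nat_diff field_simps\<close>)
  qed
  have "(\<lambda>N. 1 / real N + real (u N) / real N * (harm N - harm (u N))
              + real (N - u N) / real N * (harm N - harm (N - u N)))
        \<longlonglongrightarrow> 0 + - \<alpha> * ln \<alpha> + - (1 - \<alpha>) * ln (1 - \<alpha>)"
    using assms
    by (intro tendsto_add lim_1_over_n scaled_harm_diff_limit ratio_u ratio_rest) auto
  moreover have "\<forall>\<^sub>F N in sequentially.
      1 / real N + real (u N) / real N * (harm N - harm (u N))
        + real (N - u N) / real N * (harm N - harm (N - u N))
      = expected_range N \<lfloor>\<alpha> * real N\<rfloor> / real N"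
    using eventually_gt_at_top[of 0]
    by eventually_elim (simp add: floor_eq expected_range_formula[OF u_le] field_simps)
  ultimately have "(\<lambda>N. expected_range N \<lfloor>\<alpha> * real N\<rfloor> / real N)
      \<longlonglongrightarrow> 0 + - \<alpha> * ln \<alpha> + - (1 - \<alpha>) * ln (1 - \<alpha>)"
    by (rule Lim_transform_eventually)
  then show ?thesis
    by (simp add: algebra_simps)
qed

lemma has_integral_reciprocal:
  fixes c p q :: real
  assumes "0 < p" "p \<le> q"
  shows "((\<lambda>t. c / t) has_integral (c * ln q - c * ln p)) {p..q}"
proof -
  have "((\<lambda>t. c * ln t) has_vector_derivative c / t) (at t within {p..q})" if "t \<in> {p..q}" for t
    using assms that
    by (auto intro!: derivative_eq_intros
             simp: has_real_derivative_iff_has_vector_derivative[symmetric] field_simps)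
  from fundamental_theorem_of_calculus[OF assms(2) this] show ?thesis
    by simp
qed

text \<open>The integral of beta g_alpha(beta): zero on [0, a], a/beta on (a, b), 1/beta on [b, 1],
  where a + b = 1; it equals the entropy of the exit distribution (alpha, 1 - alpha).\<close>
lemma integral_g_dens:
  assumes "0 < \<alpha>" "\<alpha> < 1"
  shows "integral {0..1} (\<lambda>\<beta>. \<beta> * g_dens \<alpha> \<beta>) = - \<alpha> * ln \<alpha> - (1 - \<alpha>) * ln (1 - \<alpha>)"
proof -
  define a where "a = min \<alpha> (1 - \<alpha>)"
  define b where "b = max \<alpha> (1 - \<alpha>)"
  have ab: "0 < a" "a \<le> b" "b < 1" "a + b = 1"
    using assms by (auto simp: a_def b_def)
  have g_eq: "g_dens \<alpha> \<beta> =
      (if a < \<beta> \<and> \<beta> < b then a / \<beta>\<^sup>2 else if b \<le> \<beta> \<and> \<beta> \<le> 1 then 1 / \<beta>\<^sup>2 else 0)" for \<beta>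
    by (simp add: g_dens_def a_def b_def Let_def)
  let ?f = "\<lambda>\<beta>. \<beta> * g_dens \<alpha> \<beta>"
  have on_0a: "(?f has_integral 0) {0..a}"
    by (rule has_integral_spike_finite[where S = "{a}" and f = "\<lambda>_. 0"])
       (use ab in \<open>auto simp: g_eq\<close>)
  have on_ab: "(?f has_integral (a * ln b - a * ln a)) {a..b}"
    by (rule has_integral_spike_finite[where S = "{a, b}" and f = "\<lambda>t. a / t"])
       (use ab in \<open>auto simp: g_eq power2_eq_square intro!: has_integral_reciprocal\<close>)
  have on_b1: "(?f has_integral (- ln b)) {b..1}"
  proof (rule has_integral_spike_finite[where S = "{}" and f = "\<lambda>t. 1 / t"])
    show "((\<lambda>t. 1 / t) has_integral - ln b) {b..1}"
      using has_integral_reciprocal[of b 1 1] ab by simp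
  qed (use ab in \<open>auto simp: g_eq power2_eq_square\<close>)
  have "(?f has_integral (0 + (a * ln b - a * ln a) + - ln b)) {0..1}"
    using ab by (intro has_integral_combine[OF _ _ has_integral_combine[OF _ _ on_0a on_ab] on_b1]) auto
  then have "integral {0..1} ?f = - a * ln a - (1 - a) * ln b"
    by (simp add: integral_unique algebra_simps)
  also have "\<dots> = - a * ln a - b * ln b"
    using ab by simp
  also have "\<dots> = - \<alpha> * ln \<alpha> - (1 - \<alpha>) * ln (1 - \<alpha>)"
    by (cases "\<alpha> \<le> 1 - \<alpha>") (auto simp: a_def b_def min_def max_def algebra_simps)
  finally show ?thesis .
qed

theorem mainTheorem4:
  fixes \<alpha> :: real
  assumes "0 < \<alpha>" and "\<alpha> < 1"
  shows "(\<lambda>N. expected_range N \<lfloor>\<alpha> * real N\<rfloor> / real N)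
           \<longlonglongrightarrow> integral {0..1} (\<lambda>\<beta>. \<beta> * g_dens \<alpha> \<beta>)
         \<and> integral {0..1} (\<lambda>\<beta>. \<beta> * g_dens \<alpha> \<beta>)
           = - \<alpha> * ln \<alpha> - (1 - \<alpha>) * ln (1 - \<alpha>)"
  using expected_range_limit[OF assms] integral_g_dens[OF assms] by simp

end
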